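(* Let $(\xi,\eta)$ satisfy $\xi>0$, $\eta>0$, $\xi+\eta<1$, and let $(i_n)$, $(j_n)$ be sequences of non-negative integers with $i_n/n\to\xi$ and $j_n/n\to\eta$ as $n\to\infty$. Let $A_{i,j}(1/n)$ denote the coefficient of $u^iv^jw^{n-i-j}$ in $P_{1/n}(u,v,w)$. Then $A_{i_n,j_n}(1/n)>0$ for all sufficiently large $n$, and $$\lim_{n\to\infty}\frac1n\ln A_{i_n,j_n}(1/n)=(1-\eta)\,H\!\Big(\frac{\xi}{1-\eta}\Big)+(\xi+\eta)\,H\!\Big(\frac{\xi}{\xi+\eta}\Big),$$ where $H(p)=-p\ln p-(1-p)\ln(1-p)$.
   Context: Markov polynomials. Let $x,y,z$ be indeterminates. Consider the set consisting of all rationals $\rho\in[0,1]$, each written in lowest terms $\rho=a/b$ with integers $a\ge 0$, $b\ge 1$, together with the formal symbol $1/0$. Define Laurent polynomials $M_\rho(x,y,z)$ recursively by $M_{1/0}=y$, $M_{0/1}=x$, $M_{1/1}=\frac{x^2+y^2}{z}$, and: whenever $a/b$, $c/d$ are in this set with $|ad-bc|=1$ and $(a+2c)/(b+2d)\in[0,1]$, then $M_{\frac{a+2c}{b+2d}}=\big(M_{c/d}^2+M_{\frac{a+c}{b+d}}^2\big)/M_{a/b}$. This determines $M_\rho$ for every rational $\rho\in[0,1]$. Numerator. For coprime $1\le a\le b$, $P_{a/b}(u,v,w)$ denotes the homogeneous polynomial of degree $a+b-1$ such that $M_{a/b}(x,y,z)=P_{a/b}(x^2,y^2,z^2)/(x^{a-1}y^{b-1}z^{a+b-1})$;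 its existence is known. *)

theory Defs
  imports Complex_Main "HOL-Computational_Algebra.Polynomial" "HOL-Computational_Algebra.Fraction_Field"
begin

text \<open>Trivariate integer polynomials are modelled as nested univariate polynomials
  \<open>int poly poly poly\<close>: the outer variable is u (resp. x), the middle one v (resp. y),
  the inner one w (resp. z). The coefficient of u^i v^j w^k in P is
  coeff (coeff (coeff P i) j) k. Laurent polynomials / rational functions in x,y,z
  live in the fraction field \<open>int poly poly poly fract\<close>.\<close>

type_synonym mpoly3 = "int poly poly poly"

definition frac :: "mpoly3 \<Rightarrow> mpoly3 fract" where "frac p = Fract p 1"

definition Xv :: mpoly3 where "Xv = [:0, 1:]"
definition Yv :: mpoly3 where "Yv = [:[:0, 1:]:]"
definition Zv :: mpoly3 where "Zv = [:[:[:0, 1:]:]:]"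

definition subst3 :: "mpoly3 \<Rightarrow> mpoly3 \<Rightarrow> mpoly3 \<Rightarrow> mpoly3 \<Rightarrow> mpoly3" where
  "subst3 P a b c =
     poly (map_poly (\<lambda>q. poly (map_poly (\<lambda>r. poly (map_poly of_int r) c) q) b) P) a"

text \<open>The recursive definition of Markov polynomials M_{a/b}; a rational a/b in lowest
  terms (or the symbol 1/0) is represented by the pair (a,b).\<close>
inductive markov_rel :: "nat \<times> nat \<Rightarrow> mpoly3 fract \<Rightarrow> bool" where
  base_inf: "markov_rel (1, 0) (frac Yv)"
| base_zero: "markov_rel (0, 1) (frac Xv)"
| base_one: "markov_rel (1, 1) ((frac Xv ^ 2 + frac Yv ^ 2) / frac Zv)"
| step: "\<lbrakk> markov_rel (a, b) Ma; markov_rel (c, d) Mc; markov_rel (a + c, b + d) Mac;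
           \<bar>int a * int d - int b * int c\<bar> = 1;
           0 < b + 2 * d; a + 2 * c \<le> b + 2 * d \<rbrakk>
         \<Longrightarrow> markov_rel (a + 2 * c, b + 2 * d) ((Mc ^ 2 + Mac ^ 2) / Ma)"

definition markovM :: "nat \<Rightarrow> nat \<Rightarrow> mpoly3 fract" where
  "markovM a b = (THE m. markov_rel (a, b) m)"

definition markovP :: "nat \<Rightarrow> nat \<Rightarrow> mpoly3" where
  "markovP a b = (THE P. markovM a b =
      frac (subst3 P (Xv ^ 2) (Yv ^ 2) (Zv ^ 2))
      / frac (Xv ^ (a - 1) * Yv ^ (b - 1) * Zv ^ (a + b - 1)))"

definition coeffA :: "nat \<Rightarrow> nat \<Rightarrow> nat \<Rightarrow> int" where
  "coeffA i j n = (if i + j \<le> n then coeff (coeff (coeff (markovP 1 n) i) j) (n - i - j) else 0)"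

definition entropyH :: "real \<Rightarrow> real" where
  "entropyH p = - p * ln p - (1 - p) * ln (1 - p)"

end

theory Submission
  imports Defs
begin

text \<open>For a = 1 the Markov recursion collapses to M(1/(n+2)) = (x^2 + M(1/(n+1))^2) / M(1/n).
  Let Q(n) satisfy the linear recurrence Q(n+2) = (u + v + w) Q(n+1) - vw Q(n), Q(0) = 1,
  Q(1) = u + v, and put S(n) = Q(n)(x^2, y^2, z^2). The Casoratian S(n+2) S(n) - S(n+1)^2 is exactly
  x^2 z^2 (y^2 z^2)^n, which is what makes y S(n) / (yz)^n satisfy the nonlinear recursion; hence
  M(1/n) = y S(n) / (yz)^n and P_{1/n} = Q(n). Pascal's rule solves the linear recurrence
  coefficientwise: the coefficient of u^i v^j w^k is C(i+j, i) C(i+k-1, k), so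
  A_{i,j}(1/n) = C(i+j, i) C(n-j-1, i-1). The elementary Stirling bounds
  n ln n - n <= ln n! <= n ln n - n + 1 + ln n give ln C(m, k) = m H(k/m) + O(ln m), and the two
  binomial factors contribute the two entropy terms.\<close>

section \<open>Substitution as a ring homomorphism\<close>

locale comm_ring_hom =
  fixes f :: "'a::comm_ring_1 \<Rightarrow> 'b::comm_ring_1"
  assumes hom_1: "f 1 = 1"
    and hom_add: "f (a + b) = f a + f b"
    and hom_mult: "f (a * b) = f a * f b"
begin

lemma hom_0: "f 0 = 0"
  using hom_add[of 0 0] by simp

lemma hom_diff: "f (a - b) = f a - f b"
  using hom_add[of "a - b" b] by (simp add: algebra_simps)

lemma hom_power: "f (a ^ n) = f a ^ n"
  by (induction n) (simp_all add: hom_1 hom_mult)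

lemma map_poly_add: "map_poly f (p + q) = map_poly f p + map_poly f q"
  by (rule poly_eqI) (simp add: coeff_map_poly hom_0 hom_add)

lemma map_poly_mult: "map_poly f (p * q) = map_poly f p * map_poly f q"
proof (induction p)
  case 0
  then show ?case by simp
next
  case (pCons a p)
  have "pCons a p * q = smult a q + pCons 0 (p * q)"
    by simp
  moreover have "map_poly f (smult a q) = smult (f a) (map_poly f q)"
    by (rule poly_eqI) (simp add: coeff_map_poly hom_0 hom_mult)
  ultimately show ?case
    using pCons.IH by (simp add: map_poly_add map_poly_pCons hom_0)
qed

lemma comm_ring_hom_eval: "comm_ring_hom (\<lambda>p. poly (map_poly f p) x)"
  by unfold_locales (simp_all add: hom_1 map_poly_add map_poly_mult)

end

lemma comm_ring_hom_of_int: "comm_ring_hom (of_int :: int \<Rightarrow> 'a::comm_ring_1)"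
  by unfold_locales simp_all

interpretation subst3: comm_ring_hom "\<lambda>P. subst3 P a b c"
  unfolding subst3_def by (intro comm_ring_hom.comm_ring_hom_eval comm_ring_hom_of_int)

lemma subst3_Xv: "subst3 Xv a b c = a"
  by (simp add: subst3_def Xv_def map_poly_pCons)

lemma subst3_Yv: "subst3 Yv a b c = b"
  by (simp add: subst3_def Yv_def map_poly_pCons)

lemma subst3_Zv: "subst3 Zv a b c = c"
  by (simp add: subst3_def Zv_def map_poly_pCons)

lemma coeff_pcompose_square:
  fixes p :: "'a::comm_ring_1 poly"
  shows "coeff (pcompose p [:0, 0, 1:]) (2 * i) = coeff p i"
proof (induction p arbitrary: i)
  case 0
  then show ?case by simp
next
  case (pCons a p)
  then show ?case
    by (cases i) (simp_all add: pcompose_pCons)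
qed

lemma poly_map_poly_const:
  "f 0 = 0 \<Longrightarrow> poly (map_poly (\<lambda>x. [:f x:]) p) [:t:] = [:poly (map_poly f p) t:]"
  by (induction p) (simp_all add: map_poly_pCons mult.commute)

lemma subst3_squares:
  "subst3 P (Xv^2) (Yv^2) (Zv^2) =
     pcompose (map_poly (\<lambda>q. pcompose (map_poly (\<lambda>r. pcompose r [:0, 0, 1:]) q) [:0, 0, 1:]) P)
       [:0, 0, 1:]"
proof -
  have squares: "Xv^2 = [:0, 0, 1:]" "Yv^2 = [:[:0, 0, 1:]:]" "Zv^2 = [:[:[:0, 0, 1:]:]:]"
    by (simp_all add: Xv_def Yv_def Zv_def power2_eq_square)
  have inner: "poly (map_poly of_int r) [:[:[:0, 0, 1:]:]:] = [:[:pcompose r [:0, 0, 1:]:]:]"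
    for r :: "int poly"
  proof -
    have "map_poly (of_int :: int \<Rightarrow> mpoly3) r = map_poly (\<lambda>x. [:[:[:x:]:]:]) r"
      by (rule map_poly_cong) (simp add: of_int_poly)
    then show ?thesis
      using poly_map_poly_const[of "\<lambda>x. [:[:x:]:]" r "[:[:0, 0, 1:]:]"]
      poly_map_poly_const[of "\<lambda>x. [:x:]" r "[:0, 0, 1:]"]
      by (simp add: pcompose_altdef)
  qed
  have middle: "poly (map_poly (\<lambda>r. [:[:pcompose r [:0, 0, 1:]:]:]) q) [:[:0, 0, 1:]:] =
      [:pcompose (map_poly (\<lambda>r. pcompose r [:0, 0, 1:]) q) [:0, 0, 1:]:]" for q :: "int poly poly"
    using poly_map_poly_const[of "\<lambda>r. [:pcompose r [:0, 0, 1:]:]" q "[:0, 0, 1:]"]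
    by (simp add: pcompose_altdef[of "map_poly _ q"] map_poly_map_poly o_def)
  show ?thesis
    unfolding subst3_def squares inner middle
    by (simp add: pcompose_altdef[of "map_poly _ P"] map_poly_map_poly o_def)
qed

definition coeff3 :: "mpoly3 \<Rightarrow> nat \<Rightarrow> nat \<Rightarrow> nat \<Rightarrow> int" where
  "coeff3 p i j k = coeff (coeff (coeff p i) j) k"

lemma coeff3_subst3_squares:
  "coeff3 (subst3 P (Xv^2) (Yv^2) (Zv^2)) (2 * i) (2 * j) (2 * k) = coeff3 P i j k"
  by (simp add: coeff3_def subst3_squares coeff_pcompose_square coeff_map_poly)

lemma subst3_squares_inject:
  "subst3 P (Xv^2) (Yv^2) (Zv^2) = subst3 Q (Xv^2) (Yv^2) (Zv^2) \<longleftrightarrow> P = Q"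
proof
  assume "subst3 P (Xv^2) (Yv^2) (Zv^2) = subst3 Q (Xv^2) (Yv^2) (Zv^2)"
  then have "coeff3 P i j k = coeff3 Q i j k" for i j k
    by (metis coeff3_subst3_squares)
  then show "P = Q"
    by (simp add: coeff3_def poly_eq_iff)
qed simp

section \<open>The linear recurrence and its coefficients\<close>

lemma coeff3_add: "coeff3 (p + q) i j k = coeff3 p i j k + coeff3 q i j k"
  by (simp add: coeff3_def)

lemma coeff3_diff: "coeff3 (p - q) i j k = coeff3 p i j k - coeff3 q i j k"
  by (simp add: coeff3_def)

lemma coeff3_Xv_mult: "coeff3 (Xv * p) i j k = (if i = 0 then 0 else coeff3 p (i - 1) j k)"
  by (simp add: coeff3_def Xv_def coeff_pCons split: nat.splits)

lemma coeff3_Yv_mult: "coeff3 (Yv * p) i j k = (if j = 0 then 0 else coeff3 p i (j - 1) k)"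
  by (simp add: coeff3_def Yv_def coeff_pCons split: nat.splits)

lemma coeff3_Zv_mult: "coeff3 (Zv * p) i j k = (if k = 0 then 0 else coeff3 p i j (k - 1))"
  by (simp add: coeff3_def Zv_def coeff_pCons split: nat.splits)

lemma coeff3_1: "coeff3 1 i j k = (if i = 0 \<and> j = 0 \<and> k = 0 then 1 else 0)"
  by (simp add: coeff3_def coeff_1)

fun P_recip :: "nat \<Rightarrow> mpoly3" where
  "P_recip 0 = 1"
| "P_recip (Suc 0) = Xv + Yv"
| "P_recip (Suc (Suc n)) = (Xv + Yv + Zv) * P_recip (Suc n) - Yv * (Zv * P_recip n)"

text \<open>With truncated subtraction, recip_coeff 0 j k is 1 for k = 0 and 0 otherwise.\<close>

definition recip_coeff :: "nat \<Rightarrow> nat \<Rightarrow> nat \<Rightarrow> int" where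
  "recip_coeff i j k = int ((i + j) choose i) * int ((i + k - 1) choose k)"

lemma recip_coeff_rec:
  assumes "i + j + k \<ge> 2"
  shows "recip_coeff i j k =
      (if i = 0 then 0 else recip_coeff (i - 1) j k) + (if j = 0 then 0 else recip_coeff i (j - 1) k)
    + (if k = 0 then 0 else recip_coeff i j (k - 1))
    - (if j = 0 \<or> k = 0 then 0 else recip_coeff i (j - 1) (k - 1))"
proof (cases i)
  case 0
  have "recip_coeff 0 j' k' = (if k' = 0 then 1 else 0)" for j' k'
    by (simp add: recip_coeff_def)
  then show ?thesis
    using 0 assms by (cases j; cases k) auto
next
  case (Suc a)
  have pascal_k: "int (Suc (a + c) choose Suc c) = int ((a + c) choose c) + int ((a + c) choose Suc c)"
    for c by simp
  have pascal_j: "int (Suc (Suc (a + b)) choose Suc a) =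
      int (Suc (a + b) choose a) + int (Suc (a + b) choose Suc a)" for b
    by simp
  show ?thesis
  proof (cases j)
    case 0
    then show ?thesis
      using Suc pascal_k by (cases k) (simp_all add: recip_coeff_def algebra_simps)
  next
    case (Suc b)
    then show ?thesis
      using \<open>i = Suc a\<close> pascal_k pascal_j[of b]
      by (cases k) (simp_all add: recip_coeff_def algebra_simps)
  qed
qed

lemma coeff3_P_recip:
  "coeff3 (P_recip n) i j k = (if i + j + k = n then recip_coeff i j k else 0)"
proof (induction n arbitrary: i j k rule: P_recip.induct)
  case 1
  then show ?case by (simp add: coeff3_1 recip_coeff_def)
next
  case 2
  then show ?case
    by (cases i; cases j; cases k)
      (auto simp: coeff3_add coeff3_Xv_mult[of 1, simplified] coeff3_Yv_mult[of 1, simplified]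
        coeff3_1 recip_coeff_def)
next
  case (3 n)
  let ?m = "Suc (Suc n)"
  have "coeff3 (P_recip ?m) i j k =
      coeff3 (Xv * P_recip (Suc n)) i j k + coeff3 (Yv * P_recip (Suc n)) i j k
    + coeff3 (Zv * P_recip (Suc n)) i j k - coeff3 (Yv * (Zv * P_recip n)) i j k"
    by (simp add: distrib_right coeff3_add coeff3_diff)
  moreover have "coeff3 (Xv * P_recip (Suc n)) i j k =
      (if i + j + k = ?m \<and> i \<noteq> 0 then recip_coeff (i - 1) j k else 0)"
    by (auto simp: coeff3_Xv_mult 3)
  moreover have "coeff3 (Yv * P_recip (Suc n)) i j k =
      (if i + j + k = ?m \<and> j \<noteq> 0 then recip_coeff i (j - 1) k else 0)"
    by (auto simp: coeff3_Yv_mult 3)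
  moreover have "coeff3 (Zv * P_recip (Suc n)) i j k =
      (if i + j + k = ?m \<and> k \<noteq> 0 then recip_coeff i j (k - 1) else 0)"
    by (auto simp: coeff3_Zv_mult 3)
  moreover have "coeff3 (Yv * (Zv * P_recip n)) i j k =
      (if i + j + k = ?m \<and> j \<noteq> 0 \<and> k \<noteq> 0 then recip_coeff i (j - 1) (k - 1) else 0)"
    by (auto simp: coeff3_Yv_mult coeff3_Zv_mult 3)
  ultimately show ?case
    using recip_coeff_rec[of i j k] by auto
qed

lemma P_recip_nonzero: "P_recip n \<noteq> 0"
proof
  assume "P_recip n = 0"
  then have "coeff3 (P_recip n) 0 n 0 = 0"
    by (simp add: coeff3_def)
  then show False
    by (simp add: coeff3_P_recip recip_coeff_def)
qed

section \<open>Markov polynomials with numerator 1\<close>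

lemma casoratian_linear_recurrence:
  fixes s :: "nat \<Rightarrow> 'a::comm_ring_1"
  assumes rec: "\<And>n. s (Suc (Suc n)) = a * s (Suc n) - b * s n"
  shows "s (Suc (Suc n)) * s n - s (Suc n)^2 = b^n * (s 2 * s 0 - s 1^2)"
proof (induction n)
  case 0
  then show ?case by (simp add: numeral_2_eq_2)
next
  case (Suc n)
  have "s (Suc (Suc (Suc n))) * s (Suc n) - s (Suc (Suc n))^2 =
      b * (s (Suc (Suc n)) * s n - s (Suc n)^2)"
    by (simp only: rec[of "Suc n"] rec[of n]) (simp add: algebra_simps power2_eq_square)
  then show ?case
    using Suc by simp
qed

interpretation frac: comm_ring_hom frac
  by unfold_locales (simp_all add: frac_def One_fract_def)

lemma frac_eq_iff: "frac p = frac q \<longleftrightarrow> p = q"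
  by (simp add: frac_def eq_fract)

abbreviation "fx \<equiv> frac Xv"
abbreviation "fy \<equiv> frac Yv"
abbreviation "fz \<equiv> frac Zv"

lemma fy_nonzero: "fy \<noteq> 0" and fz_nonzero: "fz \<noteq> 0"
  using frac_eq_iff[of _ 0] by (simp_all add: frac.hom_0 Yv_def Zv_def)

definition P_recip_sq :: "nat \<Rightarrow> mpoly3 fract" where
  "P_recip_sq n = frac (subst3 (P_recip n) (Xv^2) (Yv^2) (Zv^2))"

lemma P_recip_sq_rec:
  "P_recip_sq (Suc (Suc n)) = (fx^2 + fy^2 + fz^2) * P_recip_sq (Suc n) - fy^2 * fz^2 * P_recip_sq n"
  by (simp add: P_recip_sq_def subst3.hom_add subst3.hom_mult subst3.hom_diff subst3_Xv subst3_Yv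
      subst3_Zv frac.hom_add frac.hom_mult frac.hom_diff frac.hom_power mult.assoc)

lemma P_recip_sq_0: "P_recip_sq 0 = 1"
  and P_recip_sq_1: "P_recip_sq (Suc 0) = fx^2 + fy^2"
  by (simp_all add: P_recip_sq_def subst3.hom_1 subst3.hom_add subst3_Xv subst3_Yv
      frac.hom_1 frac.hom_add frac.hom_power)

lemma P_recip_sq_casoratian:
  "P_recip_sq (Suc (Suc n)) * P_recip_sq n - P_recip_sq (Suc n)^2 = (fy^2 * fz^2)^n * fx^2 * fz^2"
  using P_recip_sq_0 P_recip_sq_1 casoratian_linear_recurrence[of P_recip_sq, OF P_recip_sq_rec, of n]
  by (simp add: P_recip_sq_rec[of 0] numeral_2_eq_2 algebra_simps power2_eq_square)

lemma P_recip_sq_nonzero: "P_recip_sq n \<noteq> 0"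
  using P_recip_nonzero subst3_squares_inject[of "P_recip n" 0] frac_eq_iff[of _ 0]
  by (simp add: P_recip_sq_def subst3.hom_0 frac.hom_0)

fun M_recip :: "nat \<Rightarrow> mpoly3 fract" where
  "M_recip 0 = fy"
| "M_recip (Suc 0) = (fx^2 + fy^2) / fz"
| "M_recip (Suc (Suc n)) = (fx^2 + M_recip (Suc n)^2) / M_recip n"

lemma M_recip_eq: "M_recip n = fy * P_recip_sq n / (fy * fz)^n"
proof (induction n rule: M_recip.induct)
  case 1
  then show ?case by (simp add: P_recip_sq_0)
next
  case 2
  then show ?case
    using fy_nonzero by (simp add: P_recip_sq_1)
next
  case (3 n)
  define q where "q = fy * fz"
  define D where "D = q ^ n"
  have nonzero: "fy \<noteq> 0" "fz \<noteq> 0" "q \<noteq> 0" "D \<noteq> 0" "P_recip_sq n \<noteq> 0"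
    using fy_nonzero fz_nonzero P_recip_sq_nonzero by (simp_all add: q_def D_def)
  have key: "fy^2 * (P_recip_sq (Suc (Suc n)) * P_recip_sq n - P_recip_sq (Suc n)^2) = fx^2 * q^2 * D^2"
    unfolding P_recip_sq_casoratian q_def D_def by (simp add: algebra_simps power_mult_distrib flip: power_mult)
  have IH: "M_recip n = fy * P_recip_sq n / D" "M_recip (Suc n) = fy * P_recip_sq (Suc n) / (D * q)"
    using 3 by (simp_all add: q_def D_def mult.commute)
  have "M_recip (Suc (Suc n)) = fy * P_recip_sq (Suc (Suc n)) / (D * q * q)"
    unfolding M_recip.simps IH using key nonzero by (simp add: field_simps power2_eq_square)
  then show ?case
    by (simp add: q_def D_def power2_eq_square mult.assoc)
qed

lemma markov_rel_zero: "markov_rel (0, d) m \<Longrightarrow> d = 1 \<and> m = fx"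
  by (induction "(0::nat, d)" m arbitrary: d rule: markov_rel.induct) auto

lemma markov_rel_M_recip: "markov_rel (1, n) (M_recip n)"
proof (induction n rule: M_recip.induct)
  case 1
  then show ?case using markov_rel.base_inf by simp
next
  case 2
  then show ?case using markov_rel.base_one by simp
next
  case (3 n)
  have "markov_rel (1 + 2 * 0, n + 2 * 1) ((fx^2 + M_recip (Suc n)^2) / M_recip n)"
    by (rule markov_rel.step[OF 3(2) markov_rel.base_zero]) (use 3(1) in simp_all)
  then show ?case by simp
qed

lemma markov_rel_one_unique: "markov_rel (1, n) m \<Longrightarrow> m = M_recip n"
proof (induction n arbitrary: m rule: less_induct)
  case (less n)
  from less.prems show ?case
  proof (cases rule: markov_rel.cases)
    case (step a b Ma c d Mc Mac)
    \<comment> \<open>a + 2c = 1 and |ad - bc| = 1 force a = 1 and (c, d) = (0, 1)\<close>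
    then have "c = 0" "a = 1"
      by auto
    with step have "d = 1" "Mc = fx" "n = Suc (Suc b)"
      using markov_rel_zero[of d Mc] by auto
    with step \<open>c = 0\<close> \<open>a = 1\<close> show ?thesis
      using less.IH[of b Ma] less.IH[of "Suc b" Mac] by simp
  qed simp_all
qed

lemma markovM_1: "markovM 1 n = M_recip n"
  unfolding markovM_def using markov_rel_M_recip markov_rel_one_unique by blast

lemma markovP_1:
  assumes "n \<ge> 1"
  shows "markovP 1 n = P_recip n"
proof -
  define denom where "denom = frac (Xv ^ (1 - 1) * Yv ^ (n - 1) * Zv ^ (1 + n - 1))"
  have "fy * denom = (fy * fz)^n"
    using assms by (simp add: denom_def frac.hom_mult frac.hom_power power_mult_distrib
        flip: power_Suc[of fy])
  then have denom_eq: "denom = (fy * fz)^n / fy"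
    using fy_nonzero by (simp add: field_simps)
  have "markovM 1 n = frac (subst3 P (Xv^2) (Yv^2) (Zv^2)) / denom
      \<longleftrightarrow> frac (subst3 P (Xv^2) (Yv^2) (Zv^2)) = P_recip_sq n" for P
    unfolding markovM_1 M_recip_eq denom_eq using fy_nonzero fz_nonzero by (auto simp: field_simps)
  then have "markovM 1 n = frac (subst3 P (Xv^2) (Yv^2) (Zv^2)) / denom \<longleftrightarrow> P = P_recip n" for P
    by (simp add: P_recip_sq_def frac_eq_iff subst3_squares_inject)
  then show ?thesis
    unfolding markovP_def denom_def by simp
qed

lemma coeffA_1:
  assumes "1 \<le> i" "i + j \<le> n"
  shows "coeffA i j n = int ((i + j) choose i) * int ((n - j - 1) choose (i - 1))"
proof -
  have "(n - j - 1) choose (n - i - j) = (n - j - 1) choose (i - 1)"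
    using assms binomial_symmetric[of "i - 1" "n - j - 1"] by (simp add: algebra_simps)
  moreover have "i + (n - i - j) - 1 = n - j - 1" "n \<ge> 1"
    using assms by simp_all
  ultimately show ?thesis
    using assms coeff3_P_recip[of n i j "n - i - j"]
    unfolding coeffA_def markovP_1[OF \<open>n \<ge> 1\<close>] by (simp add: coeff3_def recip_coeff_def)
qed

section \<open>Entropy asymptotics of binomial coefficients\<close>

lemma ln_fact_bounds:
  assumes "n \<ge> 1"
  shows "real n * ln n - n \<le> ln (fact n)" and "ln (fact n) \<le> real n * ln n - n + 1 + ln n"
proof -
  have "real n * ln n - n \<le> ln (fact n) \<and> ln (fact n) \<le> real n * ln n - n + 1 + ln n"
    using assms
  proof (induction n rule: dec_induct)
    case base
    then show ?case by simp
  next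
    case (step n)
    have n: "real n > 0"
      using step.hyps by simp
    have "ln (fact (Suc n) :: real) = ln (real n + 1) + ln (fact n)"
      by (simp add: ln_mult add.commute)
    moreover have "ln (real n + 1) - ln n \<le> 1 / n" and "ln n - ln (real n + 1) \<le> - 1 / (real n + 1)"
      using ln_diff_le[of "real n + 1" n] ln_diff_le[of n "real n + 1"] n
      by (simp_all add: diff_divide_distrib)
    ultimately show ?case
      using step.IH n by (simp add: field_simps)
  qed
  then show "real n * ln n - n \<le> ln (fact n)" and "ln (fact n) \<le> real n * ln n - n + 1 + ln n"
    by simp_all
qed

lemma scaled_entropyH:
  fixes a b :: real
  assumes "0 < b" "b < a"
  shows "a * entropyH (b / a) = a * ln a - b * ln b - (a - b) * ln (a - b)"
proof -
  have "1 - b / a = (a - b) / a"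
    using assms by (simp add: field_simps)
  then show ?thesis
    using assms by (simp add: entropyH_def ln_div field_simps)
qed

lemma ln_binomial_entropyH_bound:
  assumes "0 < k" "k < m"
  shows "\<bar>ln (real (m choose k)) - m * entropyH (k / m)\<bar> \<le> 2 * (1 + ln m)"
proof -
  define d where "d = m - k"
  have d: "real d = real m - real k" "d \<ge> 1"
    using assms by (simp_all add: d_def of_nat_diff)
  have "ln (real (m choose k)) = ln (fact m) - ln (fact k) - ln (fact d)"
    using assms by (simp add: d_def binomial_fact ln_div ln_mult)
  moreover have "m * entropyH (k / m) = m * ln m - k * ln k - d * ln d"
    using assms scaled_entropyH[of k m] by (simp add: d)
  moreover have "ln k \<le> ln m" "ln d \<le> ln m" "0 \<le> ln m"
    using assms d by (simp_all add: ln_mono)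
  moreover have "k \<ge> 1" "m \<ge> 1"
    using assms by simp_all
  note ln_fact_bounds[OF this(1)] ln_fact_bounds[OF this(2)] ln_fact_bounds[OF \<open>d \<ge> 1\<close>]
  ultimately show ?thesis
    using d(1) unfolding abs_le_iff by argo
qed

lemma tendsto_ln_binomial_entropyH:
  fixes m k :: "nat \<Rightarrow> nat" and \<alpha> \<beta> :: real
  assumes m: "(\<lambda>n. real (m n) / real n) \<longlonglongrightarrow> \<alpha>"
    and k: "(\<lambda>n. real (k n) / real n) \<longlonglongrightarrow> \<beta>"
    and "0 < \<beta>" "\<beta> < \<alpha>"
  shows "(\<lambda>n. ln (real (m n choose k n)) / real n) \<longlonglongrightarrow> \<alpha> * entropyH (\<beta> / \<alpha>)"
proof -
  have "\<forall>\<^sub>F n in sequentially. 0 < real (k n) / real n \<and> real (k n) / real n < real (m n) / real n"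
    using order_tendstoD(1)[OF k \<open>0 < \<beta>\<close>] tendsto_diff[OF m k] \<open>\<beta> < \<alpha>\<close>
    by (auto simp: eventually_conj_iff dest: order_tendstoD(1)[where a = 0])
  then have ev: "\<forall>\<^sub>F n in sequentially. 0 < k n \<and> k n < m n \<and> 0 < n"
    by eventually_elim (auto simp: zero_less_divide_iff divide_less_cancel)
  define err where "err n = ln (real (m n choose k n)) - m n * entropyH (k n / m n)" for n
  have "(\<lambda>n. real (m n) / n * entropyH ((real (k n) / n) / (real (m n) / n))) \<longlonglongrightarrow> \<alpha> * entropyH (\<beta> / \<alpha>)"
    unfolding entropyH_def using assms by (intro tendsto_intros m k) auto
  moreover have "(\<lambda>n. err n / n) \<longlonglongrightarrow> 0"
  proof -
    have "(\<lambda>n. 1 / n + ln (real (m n) / n) * (1 / n) + ln n / n) \<longlonglongrightarrow> 0 + ln \<alpha> * 0 + 0"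
      using filterlim_compose[OF ln_x_over_x_tendsto_0 filterlim_real_sequentially] assms
      by (intro tendsto_intros m) (auto simp: o_def)
    moreover have "\<forall>\<^sub>F n in sequentially. 1 / n + ln (real (m n) / n) * (1 / n) + ln n / n = (1 + ln (m n)) / n"
      using ev by eventually_elim (simp add: ln_div field_simps)
    ultimately have ln_m_small: "(\<lambda>n. (1 + ln (real (m n))) / n) \<longlonglongrightarrow> 0"
      by (simp add: tendsto_cong)
    show ?thesis
    proof (rule tendsto_0_le[OF ln_m_small, where K = 2])
      show "\<forall>\<^sub>F n in sequentially. norm (err n / n) \<le> norm ((1 + ln (real (m n))) / n) * 2"
        using ev
      proof eventually_elim
        case (elim n)
        then have "\<bar>err n\<bar> \<le> 2 * (1 + ln (m n))"
          unfolding err_def by (intro ln_binomial_entropyH_bound) auto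
        moreover have "0 \<le> ln (real (m n))"
          using elim by simp
        ultimately show ?case
          using elim by (simp add: abs_divide divide_right_mono)
      qed
    qed
  qed
  ultimately have "(\<lambda>n. real (m n) / n * entropyH ((real (k n) / n) / (real (m n) / n)) + err n / n)
      \<longlonglongrightarrow> \<alpha> * entropyH (\<beta> / \<alpha>) + 0"
    by (rule tendsto_add)
  moreover have "\<forall>\<^sub>F n in sequentially. real (m n) / n * entropyH ((real (k n) / n) / (real (m n) / n)) + err n / n
      = ln (real (m n choose k n)) / real n"
    using ev by eventually_elim (simp add: err_def field_simps)
  ultimately show ?thesis
    by (simp add: tendsto_cong)
qed

lemma tendsto_of_nat_over_n_affine:
  fixes f g :: "nat \<Rightarrow> nat"
  assumes "(\<lambda>n. real (f n) / real n) \<longlonglongrightarrow> a"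
    and "\<forall>\<^sub>F n in sequentially. real (g n) = b * real n + s * real (f n) + c"
  shows "(\<lambda>n. real (g n) / real n) \<longlonglongrightarrow> b + s * a"
proof -
  have "(\<lambda>n. b + s * (real (f n) / real n) + c / real n) \<longlonglongrightarrow> b + s * a + 0"
    by (intro tendsto_intros assms(1))
  moreover have "\<forall>\<^sub>F n in sequentially. b + s * (real (f n) / real n) + c / real n = real (g n) / real n"
    using assms(2) eventually_gt_at_top[of 0] by eventually_elim (simp add: field_simps)
  ultimately show ?thesis
    by (simp add: tendsto_cong)
qed

theorem proposition7p3:
  fixes \<xi> \<eta> :: real and i j :: "nat \<Rightarrow> nat"
  assumes "\<xi> > 0" and "\<eta> > 0" and "\<xi> + \<eta> < 1"
    and "(\<lambda>n. real (i n) / real n) \<longlonglongrightarrow> \<xi>"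
    and "(\<lambda>n. real (j n) / real n) \<longlonglongrightarrow> \<eta>"
  shows "(\<forall>\<^sub>F n in sequentially. coeffA (i n) (j n) n > 0)
    \<and> (\<lambda>n. ln (real_of_int (coeffA (i n) (j n) n)) / real n)
        \<longlonglongrightarrow> (1 - \<eta>) * entropyH (\<xi> / (1 - \<eta>)) + (\<xi> + \<eta>) * entropyH (\<xi> / (\<xi> + \<eta>))"
proof -
  have ij: "(\<lambda>n. real (i n + j n) / real n) \<longlonglongrightarrow> \<xi> + \<eta>"
    using tendsto_add[OF assms(4,5)] by (simp add: add_divide_distrib)
  have ev: "\<forall>\<^sub>F n in sequentially. 1 \<le> i n \<and> i n + j n < n"
    using order_tendstoD(1)[OF assms(4,1)] order_tendstoD(2)[OF ij assms(3)]
    by eventually_elim (auto simp: zero_less_divide_iff divide_less_eq)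
  have i': "(\<lambda>n. real (i n - 1) / real n) \<longlonglongrightarrow> 0 + 1 * \<xi>"
    using ev by (intro tendsto_of_nat_over_n_affine[OF assms(4)]) (auto elim: eventually_mono)
  have j': "(\<lambda>n. real (n - j n - 1) / real n) \<longlonglongrightarrow> 1 + (-1) * \<eta>"
    using ev by (intro tendsto_of_nat_over_n_affine[OF assms(5)]) (auto elim: eventually_mono)
  have "(\<lambda>n. ln (real ((n - j n - 1) choose (i n - 1))) / real n + ln (real ((i n + j n) choose i n)) / real n)
      \<longlonglongrightarrow> (1 - \<eta>) * entropyH (\<xi> / (1 - \<eta>)) + (\<xi> + \<eta>) * entropyH (\<xi> / (\<xi> + \<eta>))"
    using assms i' j' by (intro tendsto_add tendsto_ln_binomial_entropyH ij assms(4)) auto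
  moreover have "\<forall>\<^sub>F n in sequentially. coeffA (i n) (j n) n > 0 \<and>
      ln (real_of_int (coeffA (i n) (j n) n)) / real n =
      ln (real ((n - j n - 1) choose (i n - 1))) / real n + ln (real ((i n + j n) choose i n)) / real n"
    using ev
  proof eventually_elim
    case (elim n)
    then have "0 < (i n + j n) choose i n" "0 < (n - j n - 1) choose (i n - 1)"
      by (auto simp: zero_less_binomial_iff)
    with elim show ?case
      by (simp add: coeffA_1 ln_mult add_divide_distrib)
  qed
  ultimately show ?thesis
    by (auto simp: tendsto_cong eventually_conj_iff)
qed

end
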